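(* For every integer $N\ge 2$, $\displaystyle\sum_{n=2}^N\frac{1}{n}<\frac{\ln N}{(N+1)\ln\!\big(\frac{N+1}{N}\big)}$. *)

theory Defs
  imports Complex_Main
begin

end

theory Submission
  imports Defs
begin

text \<open>
  Two Pade-type bounds for the logarithm do all the work. The lower bound
  \<open>ln (1 + y) \<ge> 2y/(2 + y)\<close>, telescoped, gives
  \<open>\<Sum>n=2..N. 1/n \<le> ln ((2N + 1)/3)\<close>; the upper bound
  \<open>ln (1 + y) \<le> y(2 + y)/(2(1 + y))\<close> gives
  \<open>(N + 1) ln (1 + 1/N) \<le> (2N + 1)/(2N)\<close>. It then remains to show
  \<open>(2N + 1) ln ((2N + 1)/3) < 2N ln N\<close>; writing \<open>(2N + 1)/3 = N c\<close> and using
  \<open>ln c \<le> c - 1\<close>, this reduces to the upper bound at \<open>y = N - 1\<close>.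
\<close>

lemma ln_add_one_ge:
  fixes y :: real
  assumes "0 \<le> y"
  shows "2 * y / (2 + y) \<le> ln (1 + y)"
proof -
  let ?g = "\<lambda>t::real. ln (1 + t) - 2 * t / (2 + t)"
  have "?g 0 \<le> ?g y"
  proof (rule deriv_nonneg_imp_mono[where g = ?g and g' = "\<lambda>t. t\<^sup>2 / ((1 + t) * (2 + t)\<^sup>2)"])
    fix t :: real
    assume "t \<in> {0..y}"
    then have t: "0 \<le> t" by simp
    have "(?g has_real_derivative 1 / (1 + t) - (2 * (2 + t) - 2 * t * 1) / (2 + t)\<^sup>2) (at t)"
      using t by (auto intro!: derivative_eq_intros simp: power2_eq_square)
    moreover have "1 / (1 + t) - (2 * (2 + t) - 2 * t * 1) / (2 + t)\<^sup>2 = t\<^sup>2 / ((1 + t) * (2 + t)\<^sup>2)"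
      using t by (simp add: divide_simps power2_eq_square) (simp add: algebra_simps)
    ultimately show "(?g has_real_derivative t\<^sup>2 / ((1 + t) * (2 + t)\<^sup>2)) (at t)"
      by simp
  next
    fix t :: real
    assume "t \<in> {0..y}"
    then show "0 \<le> t\<^sup>2 / ((1 + t) * (2 + t)\<^sup>2)"
      by simp
  qed (use assms in simp)
  then show ?thesis by simp
qed

lemma ln_add_one_le:
  fixes y :: real
  assumes "0 \<le> y"
  shows "ln (1 + y) \<le> y * (2 + y) / (2 * (1 + y))"
proof -
  let ?g = "\<lambda>t::real. t * (2 + t) / (2 * (1 + t)) - ln (1 + t)"
  have "?g 0 \<le> ?g y"
  proof (rule deriv_nonneg_imp_mono[where g = ?g and g' = "\<lambda>t. t\<^sup>2 / (2 * (1 + t)\<^sup>2)"])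
    fix t :: real
    assume "t \<in> {0..y}"
    then have t: "0 \<le> t" by simp
    let ?d = "((1 * (2 + t) + t * 1) * (2 * (1 + t)) - t * (2 + t) * 2) / (2 * (1 + t))\<^sup>2 - 1 / (1 + t)"
    have "(?g has_real_derivative ?d) (at t)"
      using t by (auto intro!: derivative_eq_intros simp: power2_eq_square)
    moreover have "?d = t\<^sup>2 / (2 * (1 + t)\<^sup>2)"
      using t by (simp add: divide_simps power2_eq_square) (simp add: algebra_simps)
    ultimately show "(?g has_real_derivative t\<^sup>2 / (2 * (1 + t)\<^sup>2)) (at t)"
      by simp
  next
    fix t :: real
    assume "t \<in> {0..y}"
    then show "0 \<le> t\<^sup>2 / (2 * (1 + t)\<^sup>2)"
      by simp
  qed (use assms in simp)
  then show ?thesis by simp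
qed

lemma sum_inverse_le_ln:
  assumes "1 \<le> n"
  shows "(\<Sum>k=2..n. 1 / real k) \<le> ln ((2 * real n + 1) / 3)"
  using assms
proof (induction n rule: dec_induct)
  case base
  then show ?case by simp
next
  case (step n)
  have n: "1 \<le> real n" using step by simp
  \<comment> \<open>\<open>1 + y\<close> is the ratio of consecutive values of \<open>(2n + 1)/3\<close>, and \<open>2y/(2 + y) = 1/(n + 1)\<close>.\<close>
  define y where "y = 2 / (2 * real n + 1)"
  have y: "0 \<le> y" using n by (simp add: y_def)
  have inverse_eq: "2 * y / (2 + y) = 1 / real (Suc n)"
    using n unfolding y_def by (simp add: divide_simps) (simp add: algebra_simps)
  have "(\<Sum>k=2..Suc n. 1 / real k) = (\<Sum>k=2..n. 1 / real k) + 1 / real (Suc n)"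
    using step by simp
  also have "\<dots> \<le> ln ((2 * real n + 1) / 3) + ln (1 + y)"
    using step.IH ln_add_one_ge[OF y] inverse_eq by simp
  also have "\<dots> = ln ((2 * real n + 1) / 3 * (1 + y))"
    using n y by (intro ln_mult_pos[symmetric]) auto
  also have "(2 * real n + 1) / 3 * (1 + y) = (2 * real (Suc n) + 1) / 3"
    using n unfolding y_def by (simp add: divide_simps)
  finally show ?case .
qed

lemma mult_ln_add_inverse_le:
  fixes x :: real
  assumes "0 < x"
  shows "(x + 1) * ln ((x + 1) / x) \<le> (2 * x + 1) / (2 * x)"
proof -
  have "ln ((x + 1) / x) = ln (1 + 1 / x)"
    using assms by (simp add: field_simps)
  also have "\<dots> \<le> (1 / x) * (2 + 1 / x) / (2 * (1 + 1 / x))"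
    using assms by (intro ln_add_one_le) simp
  also have "\<dots> = (2 * x + 1) / (2 * x * (x + 1))"
    using assms by (simp add: divide_simps)
  finally have "(x + 1) * ln ((x + 1) / x) \<le> (x + 1) * ((2 * x + 1) / (2 * x * (x + 1)))"
    using assms by (intro mult_left_mono) auto
  also have "\<dots> = (2 * x + 1) / (2 * x)"
    using assms by simp
  finally show ?thesis .
qed

lemma mult_ln_two_mult_add_one_div_three_less:
  fixes x :: real
  assumes "1 < x"
  shows "(2 * x + 1) * ln ((2 * x + 1) / 3) < 2 * x * ln x"
proof -
  define c where "c = (2 * x + 1) / (3 * x)"
  define b where "b = (2 * x + 1) * (x - 1) / (3 * x)"
  have scale: "(2 * x + 1) / 3 = x * c"
    using assms unfolding c_def by simp
  have split: "(2 * x + 1) * ln ((2 * x + 1) / 3) = 2 * x * ln x + (ln x + (2 * x + 1) * ln c)"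
    unfolding scale using assms by (subst ln_mult_pos) (auto simp: c_def algebra_simps)
  have "(2 * x + 1) * ln c \<le> (2 * x + 1) * (c - 1)"
    using assms unfolding c_def by (intro mult_left_mono ln_le_minus_one) auto
  also have "\<dots> = - b"
    using assms unfolding b_def c_def by (simp add: field_simps)
  finally have "(2 * x + 1) * ln c \<le> - b" .
  moreover have "ln x < b"
  proof -
    have "ln x \<le> (x - 1) * (x + 1) / (2 * x)"
      using ln_add_one_le[of "x - 1"] assms by (simp add: add.commute)
    also have "\<dots> = b - (x - 1)\<^sup>2 / (6 * x)"
      using assms unfolding b_def by (simp add: field_simps power2_eq_square)
    also have "\<dots> < b"
      using assms by simp
    finally show ?thesis .
  qed
  ultimately show ?thesis
    unfolding split by linarith
qed

theorem lemma1:
  fixes N :: nat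
  assumes "N \<ge> 2"
  shows "(\<Sum>n=2..N. 1 / real n) < ln (real N) / ((real N + 1) * ln ((real N + 1) / real N))"
proof -
  define S where "S = (\<Sum>n=2..N. 1 / real n)"
  define D where "D = (real N + 1) * ln ((real N + 1) / real N)"
  have N: "2 \<le> real N" using assms by simp
  have "0 \<le> S" unfolding S_def by (simp add: sum_nonneg)
  have "0 < D" unfolding D_def using N by simp
  have "S * D \<le> S * ((2 * real N + 1) / (2 * real N))"
    using \<open>0 \<le> S\<close> mult_ln_add_inverse_le[of "real N"] N unfolding D_def
    by (intro mult_left_mono) auto
  also have "\<dots> \<le> ln ((2 * real N + 1) / 3) * ((2 * real N + 1) / (2 * real N))"
    using sum_inverse_le_ln[of N] assms N unfolding S_def by (intro mult_right_mono) auto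
  also have "\<dots> < ln (real N)"
    using mult_ln_two_mult_add_one_div_three_less[of "real N"] N by (simp add: field_simps)
  finally show ?thesis
    unfolding S_def[symmetric] D_def[symmetric] using \<open>0 < D\<close> by (simp add: pos_less_divide_eq)
qed

end
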